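(* $\Sigma_\iota[\lambda]\subseteq\mathrm{Im}(\Psi^\lambda_\iota)$, where $\Sigma_\iota[\lambda]=\{\mathbf x\in\mathbb Z_\iota(\lambda)\mid\varphi(\mathbf x)\ge0\text{ for all }\varphi\in\Xi_\iota[\lambda]\}$.
   Context: Let $a_1,a_2\in\mathbb Z_{\ge1}$ with $a_1a_2>4$, $A=\begin{pmatrix}2&-a_1\\-a_2&2\end{pmatrix}$, $\mathfrak g=\mathfrak g(A)$ with simple roots $\alpha_1,\alpha_2$, fundamental weights $\Lambda_1,\Lambda_2$. For $k\in\mathbb Z$, $i_k=1$ if $k$ odd, $i_k=2$ if $k$ even. $\mathbb Z^{+\infty}_{\ge0}$ (sequences $(\dots,x_2,x_1)$ of nonnegative integers, almost all zero) and $\mathbb Z^{-\infty}_{\le0}$ (sequences $(x_0,x_{-1},\dots)$ of nonpositive integers, almost all zero) carry the Nakashima–Zelevinsky crystal structures for $(\dots,i_2,i_1)$ and $(i_0,i_{-1},\dots)$; $\Psi^+:\mathcal B(\infty)\hookrightarrow\mathbb Z^{+\infty}_{\ge0}$ and $\Psi^-:\mathcal B(-\infty)\hookrightarrow\mathbb Z^{-\infty}_{\le0}$ are the corresponding crystal embeddings of the crystal bases of $U_q^-(\mathfrak g)$, $U_q^+(\mathfrak g)$ (sending highest/lowest elements to zero sequences). For $\mu$ in the weight lattice, $\mathbb Z_\iota(\mu)=\mathbb Z^{+\infty}_{\ge0}\otimes\mathcal T_\mu\otimes\mathbb Z^{-\infty}_{\le0}$ with elements $\mathbf x=(\dots,x_2,x_1)\otimes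 t_\mu\otimes(x_0,x_{-1},\dots)$, and $\mathrm{Im}(\Psi^\mu_\iota)=\mathrm{Im}(\Psi^+)\otimes t_\mu\otimes\mathrm{Im}(\Psi^-)$. Put $\alpha=\frac{a_1a_2+\sqrt{a_1^2a_2^2-4a_1a_2}}{2a_2}$, $\beta=\frac{a_1a_2+\sqrt{a_1^2a_2^2-4a_1a_2}}{2a_1}$, $\gamma_k=\alpha$ ($k$ even), $\beta$ ($k$ odd). Fix $\lambda=k_1\Lambda_1-k_2\Lambda_2$, $k_1,k_2\in\mathbb Z_{>0}$, with: if $a_1,a_2\ge2$, $k_2\le k_1<(a_1-1)k_2$ or $k_1<k_2\le(a_2-1)k_1$; if $a_1=1$, $2k_1\le k_2\le(a_2-2)k_1$; if $a_2=1$, $2k_2\le k_1\le(a_1-2)k_2$. Let $p_0=k_2$, $p_1=k_1$, $p_{m+2}=a_2p_{m+1}-p_m$ ($m\ge0$ even), $p_{m+2}=a_1p_{m+1}-p_m$ ($m\ge0$ odd), and for $m<0$: $p_m=a_2p_{m+1}-p_{m+2}$ ($m$ even), $p_m=a_1p_{m+1}-p_{m+2}$ ($m$ odd). With $\zeta_k(\mathbf x)=x_k$, let $\Xi_\iota[\lambda]=\{\gamma_0p_0+\gamma_0\zeta_0-\zeta_1,\ \gamma_1p_1+\zeta_0-\gamma_1\zeta_1\}\cup\{p_k-\zeta_k,\ \gamma_k\zeta_k-\zeta_{k+1},\ \gamma_{k+1}p_{k+1}-p_k+\zeta_k-\gamma_{k+1}\zeta_{k+1}\mid k\ge1\}\cup\{p_k+\zeta_k,\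 \zeta_{k-1}-\gamma_k\zeta_k,\ \gamma_{k-1}p_{k-1}-p_k+\gamma_{k-1}\zeta_{k-1}-\zeta_k\mid k\le0\}$. *)

theory Defs
  imports Complex_Main
begin

text \<open>Cartan matrix A = (2, -a1; -a2, 2); cartan i j = <h_i, alpha_j>.\<close>
definition cartan :: "int \<Rightarrow> int \<Rightarrow> nat \<Rightarrow> nat \<Rightarrow> int" where
  "cartan a1 a2 i j = (if i = j then 2 else if i = 1 then - a1 else - a2)"

definition ik :: "int \<Rightarrow> nat" where
  "ik k = (if odd k then 1 else 2)"

section \<open>Nakashima--Zelevinsky crystal on Z^{+infinity}_{>=0} for (..., i_2, i_1)\<close>

text \<open>Sequences are encoded as functions int => int; on the plus side only the
  entries with index k >= 1 matter.\<close>

definition sig_plus :: "int \<Rightarrow> int \<Rightarrow> (int \<Rightarrow> int) \<Rightarrow> int \<Rightarrow> int" where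
  "sig_plus a1 a2 x k = x k + (\<Sum>j\<in>{j. k < j \<and> x j \<noteq> 0}. cartan a1 a2 (ik k) (ik j) * x j)"

definition sigmax_plus :: "int \<Rightarrow> int \<Rightarrow> nat \<Rightarrow> (int \<Rightarrow> int) \<Rightarrow> int" where
  "sigmax_plus a1 a2 i x = Max ((sig_plus a1 a2 x) ` {k. 1 \<le> k \<and> ik k = i})"

definition ftil_plus :: "int \<Rightarrow> int \<Rightarrow> nat \<Rightarrow> (int \<Rightarrow> int) \<Rightarrow> (int \<Rightarrow> int)" where
  "ftil_plus a1 a2 i x =
     (let m = (LEAST k. 1 \<le> k \<and> ik k = i \<and> sig_plus a1 a2 x k = sigmax_plus a1 a2 i x)
      in x(m := x m + 1))"

text \<open>Image of Psi^+ : B(infinity) -> Z^{+infinity}: generated by the f-tilde's from 0.\<close>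
inductive_set ImPsi_plus :: "int \<Rightarrow> int \<Rightarrow> (int \<Rightarrow> int) set" for a1 a2 where
  zero: "(\<lambda>_. 0) \<in> ImPsi_plus a1 a2"
| step: "x \<in> ImPsi_plus a1 a2 \<Longrightarrow> i \<in> {1, 2} \<Longrightarrow> ftil_plus a1 a2 i x \<in> ImPsi_plus a1 a2"

definition sig_minus :: "int \<Rightarrow> int \<Rightarrow> (int \<Rightarrow> int) \<Rightarrow> int \<Rightarrow> int" where
  "sig_minus a1 a2 x k = - x k - (\<Sum>j\<in>{j. j < k \<and> x j \<noteq> 0}. cartan a1 a2 (ik k) (ik j) * x j)"

definition sigmax_minus :: "int \<Rightarrow> int \<Rightarrow> nat \<Rightarrow> (int \<Rightarrow> int) \<Rightarrow> int" where
  "sigmax_minus a1 a2 i x = Max ((sig_minus a1 a2 x) ` {k. k \<le> 0 \<and> ik k = i})"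

definition etil_minus :: "int \<Rightarrow> int \<Rightarrow> nat \<Rightarrow> (int \<Rightarrow> int) \<Rightarrow> (int \<Rightarrow> int)" where
  "etil_minus a1 a2 i x =
     (let m = (GREATEST k. k \<le> 0 \<and> ik k = i \<and> sig_minus a1 a2 x k = sigmax_minus a1 a2 i x)
      in x(m := x m - 1))"

text \<open>Image of Psi^- : B(-infinity) -> Z^{-infinity}: generated by the e-tilde's from 0.\<close>
inductive_set ImPsi_minus :: "int \<Rightarrow> int \<Rightarrow> (int \<Rightarrow> int) set" for a1 a2 where
  zero: "(\<lambda>_. 0) \<in> ImPsi_minus a1 a2"
| step: "x \<in> ImPsi_minus a1 a2 \<Longrightarrow> i \<in> {1, 2} \<Longrightarrow> etil_minus a1 a2 i x \<in> ImPsi_minus a1 a2"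

text \<open>An element (..., x_2, x_1) (x) t_lambda (x) (x_0, x_{-1}, ...) is encoded as one
  function x :: int => int with finite support, x_k >= 0 for k >= 1 and x_k <= 0 for k <= 0.\<close>
definition Zlam :: "(int \<Rightarrow> int) set" where
  "Zlam = {x. finite {k. x k \<noteq> 0} \<and> (\<forall>k\<ge>1. 0 \<le> x k) \<and> (\<forall>k\<le>0. x k \<le> 0)}"

definition ImPsi_lam :: "int \<Rightarrow> int \<Rightarrow> (int \<Rightarrow> int) set" where
  "ImPsi_lam a1 a2 = {x \<in> Zlam.
      (\<lambda>k. if 1 \<le> k then x k else 0) \<in> ImPsi_plus a1 a2 \<and>
      (\<lambda>k. if k \<le> 0 then x k else 0) \<in> ImPsi_minus a1 a2}"

fun pf :: "int \<Rightarrow> int \<Rightarrow> int \<Rightarrow> int \<Rightarrow> nat \<Rightarrow> int" where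
  "pf a1 a2 k1 k2 0 = k2"
| "pf a1 a2 k1 k2 (Suc 0) = k1"
| "pf a1 a2 k1 k2 (Suc (Suc n)) =
     (if even n then a2 else a1) * pf a1 a2 k1 k2 (Suc n) - pf a1 a2 k1 k2 n"

text \<open>pb n = p_{1-n}.\<close>
fun pb :: "int \<Rightarrow> int \<Rightarrow> int \<Rightarrow> int \<Rightarrow> nat \<Rightarrow> int" where
  "pb a1 a2 k1 k2 0 = k1"
| "pb a1 a2 k1 k2 (Suc 0) = k2"
| "pb a1 a2 k1 k2 (Suc (Suc n)) =
     (if odd n then a2 else a1) * pb a1 a2 k1 k2 (Suc n) - pb a1 a2 k1 k2 n"

definition pp :: "int \<Rightarrow> int \<Rightarrow> int \<Rightarrow> int \<Rightarrow> int \<Rightarrow> int" where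
  "pp a1 a2 k1 k2 m = (if 0 \<le> m then pf a1 a2 k1 k2 (nat m) else pb a1 a2 k1 k2 (nat (1 - m)))"

definition alpha :: "int \<Rightarrow> int \<Rightarrow> real" where
  "alpha a1 a2 = (a1 * a2 + sqrt (a1\<^sup>2 * a2\<^sup>2 - 4 * a1 * a2)) / (2 * a2)"

definition beta :: "int \<Rightarrow> int \<Rightarrow> real" where
  "beta a1 a2 = (a1 * a2 + sqrt (a1\<^sup>2 * a2\<^sup>2 - 4 * a1 * a2)) / (2 * a1)"

definition gam :: "int \<Rightarrow> int \<Rightarrow> int \<Rightarrow> real" where
  "gam a1 a2 k = (if even k then alpha a1 a2 else beta a1 a2)"

definition Xi :: "int \<Rightarrow> int \<Rightarrow> int \<Rightarrow> int \<Rightarrow> ((int \<Rightarrow> int) \<Rightarrow> real) set" where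
  "Xi a1 a2 k1 k2 =
    (let p = (\<lambda>m. real_of_int (pp a1 a2 k1 k2 m)); g = gam a1 a2 in
     {\<lambda>x. g 0 * p 0 + g 0 * x 0 - x 1, \<lambda>x. g 1 * p 1 + x 0 - g 1 * x 1}
     \<union> {\<lambda>x. p k - x k | k. 1 \<le> k}
     \<union> {\<lambda>x. g k * x k - x (k + 1) | k. 1 \<le> k}
     \<union> {\<lambda>x. g (k + 1) * p (k + 1) - p k + x k - g (k + 1) * x (k + 1) | k. 1 \<le> k}
     \<union> {\<lambda>x. p k + x k | k. k \<le> 0}
     \<union> {\<lambda>x. x (k - 1) - g k * x k | k. k \<le> 0}
     \<union> {\<lambda>x. g (k - 1) * p (k - 1) - p k + g (k - 1) * x (k - 1) - x k | k. k \<le> 0})"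

definition Sigma_lam :: "int \<Rightarrow> int \<Rightarrow> int \<Rightarrow> int \<Rightarrow> (int \<Rightarrow> int) set" where
  "Sigma_lam a1 a2 k1 k2 = {x \<in> Zlam. \<forall>\<phi>\<in>Xi a1 a2 k1 k2. 0 \<le> \<phi> x}"

end

theory Submission
  imports Defs "HOL-Library.Groups_Big_Fun"
begin

(* Of the inequalities in Xi only x_(k+1) <= gamma_k x_k (k >= 1) and gamma_k x_k <= x_(k-1)
   (k <= 0) are needed.  On the positive half they cut out a cone contained in Im Psi^+.  For
   x /= 0 in the cone let i be the colour of the top n of the support, so the maximum M of the
   sigma_k over k of colour i is at least sigma_n = x_n > 0, and let m be the largest index of
   colour i with sigma_m = M.  Then sigma_m - sigma_(m+2) >= 1, and since
   gamma_m (-c - gamma_(m+1)) = 1 for the Cartan entry c = <h_(i_m), alpha_(i_(m+1))>, this gives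
   x_(m+1) <= gamma_m (x_m - 1).  Hence x_m >= 1, lowering x_m by one stays in the cone, and
   f_i undoes the lowering; induction on the sum of the entries finishes.  The negative half is
   the mirror image under k |-> 1 - k, x |-> -x, which swaps a1 and a2 and turns f_i into
   e_(3-i). *)

lemma alpha_beta_identities:
  fixes a1 a2 :: int
  assumes "0 < a1" "0 < a2" "4 \<le> a1 * a2"
  shows "beta a1 a2 * (a1 - alpha a1 a2) = 1" and "alpha a1 a2 * (a2 - beta a1 a2) = 1"
    and "0 < alpha a1 a2" and "0 < beta a1 a2"
proof -
  define A B where "A = real_of_int a1" and "B = real_of_int a2"
  have AB: "0 < A" "0 < B" "4 \<le> A * B"
    using assms unfolding A_def B_def by (simp_all, metis of_int_le_iff of_int_mult of_int_numeral)
  define r where "r = sqrt (A\<^sup>2 * B\<^sup>2 - 4 * A * B)"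
  have disc: "0 \<le> A\<^sup>2 * B\<^sup>2 - 4 * A * B"
  proof -
    have "A\<^sup>2 * B\<^sup>2 - 4 * A * B = (A * B) * (A * B - 4)" by (simp add: power2_eq_square algebra_simps)
    then show ?thesis using AB by simp
  qed
  have r0: "0 \<le> r" unfolding r_def using disc by simp
  have root: "(A * B + r)\<^sup>2 = 2 * A * B * (A * B + r - 2)"
    using disc by (simp add: r_def power2_eq_square algebra_simps)
  have al: "alpha a1 a2 = (A * B + r) / (2 * B)" and be: "beta a1 a2 = (A * B + r) / (2 * A)"
    unfolding alpha_def beta_def A_def B_def r_def by simp_all
  show "beta a1 a2 * (a1 - alpha a1 a2) = 1" "alpha a1 a2 * (a2 - beta a1 a2) = 1"
    unfolding al be A_def[symmetric] B_def[symmetric] using AB root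
    by (simp_all add: field_simps power2_eq_square)
  show "0 < alpha a1 a2" "0 < beta a1 a2" unfolding al be using AB r0 by simp_all
qed

lemma ik_cases: "ik k = 1 \<or> ik k = 2"
  by (simp add: ik_def)

lemma ik_add_2 [simp]: "ik (k + 2) = ik k"
  by (simp add: ik_def)

lemma ik_add_1_neq: "ik (k + 1) \<noteq> ik k"
  by (simp add: ik_def)

lemma cartan_same [simp]: "cartan a1 a2 i i = 2"
  by (simp add: cartan_def)

lemma cartan_reflect: "cartan a2 a1 (ik (1 - k)) (ik (1 - j)) = cartan a1 a2 (ik k) (ik j)"
  by (simp add: cartan_def ik_def)

lemma gam_pos:
  assumes "0 < a1" "0 < a2" "4 \<le> a1 * a2"
  shows "0 < gam a1 a2 k"
  using alpha_beta_identities[OF assms] by (simp add: gam_def)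

lemma gam_mul_cartan:
  assumes "0 < a1" "0 < a2" "4 \<le> a1 * a2" and "ik k \<noteq> ik l"
  shows "gam a1 a2 k * (- cartan a1 a2 (ik k) (ik l) - gam a1 a2 l) = 1"
  using alpha_beta_identities[OF assms(1-3)] assms(4)
  by (auto simp: gam_def ik_def cartan_def split: if_splits)

lemma gam_reflect: "gam a1 a2 k = gam a2 a1 (1 - k)"
  by (simp add: gam_def alpha_def beta_def mult.commute)

lemma sig_plus_superset:
  assumes "finite S" "{j. x j \<noteq> 0} \<subseteq> S"
  shows "sig_plus a1 a2 x k = x k + (\<Sum>j\<in>{j\<in>S. k < j}. cartan a1 a2 (ik k) (ik j) * x j)"
  unfolding sig_plus_def
  by (rule arg_cong[where f = "\<lambda>s. x k + s"], rule sum.mono_neutral_left) (use assms in auto)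

lemma sig_plus_add_2:
  assumes "finite {j. x j \<noteq> 0}"
  shows "sig_plus a1 a2 x k =
    x k + cartan a1 a2 (ik k) (ik (k + 1)) * x (k + 1) + x (k + 2) + sig_plus a1 a2 x (k + 2)"
proof -
  define S where "S = {j. x j \<noteq> 0} \<union> {k + 1, k + 2}"
  have S: "finite S" "{j. x j \<noteq> 0} \<subseteq> S" using assms by (auto simp: S_def)
  have "{j\<in>S. k < j} = {k + 1, k + 2} \<union> {j\<in>S. k + 2 < j}" by (auto simp: S_def)
  then have "(\<Sum>j\<in>{j\<in>S. k < j}. cartan a1 a2 (ik k) (ik j) * x j)
      = cartan a1 a2 (ik k) (ik (k + 1)) * x (k + 1) + 2 * x (k + 2)
        + (\<Sum>j\<in>{j\<in>S. k + 2 < j}. cartan a1 a2 (ik k) (ik j) * x j)"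
    using S by (simp add: sum.union_disjoint)
  then show ?thesis
    unfolding sig_plus_superset[OF S, of a1 a2 k] sig_plus_superset[OF S, of a1 a2 "k + 2"] by simp
qed

lemma sig_plus_fun_upd:
  assumes "finite {j. x j \<noteq> 0}"
  shows "sig_plus a1 a2 (x(m := x m + d)) k = sig_plus a1 a2 x k +
    (if k = m then d else if k < m then cartan a1 a2 (ik k) (ik m) * d else 0)"
proof -
  define S where "S = {j. x j \<noteq> 0} \<union> {m}"
  have S: "finite S" "{j. x j \<noteq> 0} \<subseteq> S" "{j. (x(m := x m + d)) j \<noteq> 0} \<subseteq> S"
    using assms by (auto simp: S_def)
  have "(\<Sum>j\<in>{j\<in>S. k < j}. cartan a1 a2 (ik k) (ik j) * (x(m := x m + d)) j)
    = (\<Sum>j\<in>{j\<in>S. k < j}. cartan a1 a2 (ik k) (ik j) * x j)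
      + (\<Sum>j\<in>{j\<in>S. k < j}. if j = m then cartan a1 a2 (ik k) (ik m) * d else 0)"
    by (subst sum.distrib[symmetric], rule sum.cong) (auto simp: algebra_simps)
  also have "(\<Sum>j\<in>{j\<in>S. k < j}. if j = m then cartan a1 a2 (ik k) (ik m) * d else 0)
      = (if k < m then cartan a1 a2 (ik k) (ik m) * d else 0)"
    using S by (subst sum.delta) (auto simp: S_def)
  finally show ?thesis
    unfolding sig_plus_superset[OF S(1,3), of a1 a2 k] sig_plus_superset[OF S(1,2), of a1 a2 k]
    by auto
qed

lemma sig_plus_eq_self:
  assumes "\<forall>j>k. x j = 0"
  shows "sig_plus a1 a2 x k = x k"
  using assms unfolding sig_plus_def by (simp add: not_less_iff_gr_or_eq)

lemma finite_support_fun_upd: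
  "finite {k. x k \<noteq> 0} \<Longrightarrow> finite {k. (x(m := v)) k \<noteq> 0}"
  by (rule finite_subset[of _ "insert m {k. x k \<noteq> 0}"]) auto

lemma finite_support_bounded_above:
  fixes x :: "int \<Rightarrow> int"
  assumes "finite {j. x j \<noteq> 0}"
  obtains N where "\<forall>j>N. x j = 0"
proof -
  obtain N where "\<forall>j\<in>{j. x j \<noteq> 0}. j \<le> N"
    using bdd_above_finite[OF assms] by (auto simp: bdd_above_def)
  then show ?thesis using that by (meson linorder_not_less mem_Collect_eq)
qed

(* int is not a wellorder, so LeastI is not available for LEAST on int. *)
lemma int_bounded_below_obtains_least:
  fixes P :: "int \<Rightarrow> bool"
  assumes "P k0" and bound: "\<And>k. P k \<Longrightarrow> b \<le> k"
  obtains l where "P l" "\<And>k. P k \<Longrightarrow> l \<le> k"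
proof -
  define F where "F = {k \<in> {b..k0}. P k}"
  have fin: "finite F" unfolding F_def by (rule finite_subset[of _ "{b..k0}"]) auto
  have k0: "k0 \<in> F" using assms by (auto simp: F_def)
  have "Min F \<in> F" using fin k0 by (intro Min_in) auto
  then have "P (Min F)" by (simp add: F_def)
  moreover have "Min F \<le> k" if "P k" for k
  proof (cases "k \<le> k0")
    case True
    then have "k \<in> F" using that bound by (simp add: F_def)
    then show ?thesis using fin by (rule Min_le[rotated])
  next
    case False
    then show ?thesis using Min_le[OF fin k0] by simp
  qed
  ultimately show ?thesis by (rule that)
qed

lemma finite_sig_plus_image:
  assumes "finite {j. x j \<noteq> 0}"
  shows "finite (sig_plus a1 a2 x ` {k. 1 \<le> k \<and> ik k = i})"
proof -
  obtain N where N: "\<forall>j>N. x j = 0" using finite_support_bounded_above[OF assms] .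
  have "sig_plus a1 a2 x ` {k. 1 \<le> k \<and> ik k = i} \<subseteq> sig_plus a1 a2 x ` {1..N} \<union> {0}"
  proof
    fix s assume "s \<in> sig_plus a1 a2 x ` {k. 1 \<le> k \<and> ik k = i}"
    then obtain k where k: "1 \<le> k" "s = sig_plus a1 a2 x k" by auto
    show "s \<in> sig_plus a1 a2 x ` {1..N} \<union> {0}"
    proof (cases "k \<le> N")
      case False
      then have "sig_plus a1 a2 x k = 0" using N by (simp add: sig_plus_eq_self)
      then show ?thesis using k by simp
    qed (use k in auto)
  qed
  then show ?thesis by (rule finite_subset) simp
qed

lemma sig_plus_le_sigmax_plus:
  assumes "finite {j. x j \<noteq> 0}" "1 \<le> k" "ik k = i"
  shows "sig_plus a1 a2 x k \<le> sigmax_plus a1 a2 i x"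
  unfolding sigmax_plus_def using assms finite_sig_plus_image[OF assms(1)] by (intro Max_ge) auto

lemma sigmax_plus_attained:
  assumes "finite {j. x j \<noteq> 0}" "i \<in> {1, 2}"
  shows "\<exists>k\<ge>1. ik k = i \<and> sig_plus a1 a2 x k = sigmax_plus a1 a2 i x"
proof -
  have "1 \<le> int i \<and> ik (int i) = i" using assms(2) by (auto simp: ik_def)
  then have "{k. 1 \<le> k \<and> ik k = i} \<noteq> {}" by blast
  then have "sigmax_plus a1 a2 i x \<in> sig_plus a1 a2 x ` {k. 1 \<le> k \<and> ik k = i}"
    unfolding sigmax_plus_def using finite_sig_plus_image[OF assms(1)] by (intro Max_in) auto
  then show ?thesis by force
qed

lemma sigmax_plus_last_argmax:
  assumes "finite {j. x j \<noteq> 0}" "i \<in> {1, 2}" "0 < sigmax_plus a1 a2 i x"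
  obtains m where "1 \<le> m" "ik m = i" "sig_plus a1 a2 x m = sigmax_plus a1 a2 i x"
    "\<forall>k>m. ik k = i \<longrightarrow> sig_plus a1 a2 x k < sigmax_plus a1 a2 i x"
proof -
  define T where "T = {k. 1 \<le> k \<and> ik k = i \<and> sig_plus a1 a2 x k = sigmax_plus a1 a2 i x}"
  obtain N where N: "\<forall>j>N. x j = 0" using finite_support_bounded_above[OF assms(1)] .
  have "T \<subseteq> {1..N}"
  proof
    fix k assume k: "k \<in> T"
    have "k \<le> N"
    proof (rule ccontr)
      assume "\<not> k \<le> N"
      then have "sig_plus a1 a2 x k = 0" using N by (simp add: sig_plus_eq_self)
      then show False using k assms(3) by (simp add: T_def)
    qed
    then show "k \<in> {1..N}" using k by (simp add: T_def)
  qed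
  then have "finite T" by (rule finite_subset) simp
  moreover have "T \<noteq> {}" using sigmax_plus_attained[OF assms(1,2)] by (auto simp: T_def)
  ultimately have max_T: "Max T \<in> T" "\<forall>k\<in>T. k \<le> Max T" by simp_all
  have "sig_plus a1 a2 x k < sigmax_plus a1 a2 i x" if "Max T < k" "ik k = i" for k
  proof -
    have "1 \<le> k" using that max_T by (simp add: T_def)
    then have "k \<notin> T" "sig_plus a1 a2 x k \<le> sigmax_plus a1 a2 i x"
      using that max_T sig_plus_le_sigmax_plus[OF assms(1)] by auto
    then show ?thesis using \<open>1 \<le> k\<close> that(2) by (simp add: T_def)
  qed
  with max_T show ?thesis using that[of "Max T"] by (simp add: T_def)
qed

lemma ftil_plus_fun_upd_last_argmax:
  assumes fin: "finite {j. x j \<noteq> 0}"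
    and m: "1 \<le> m" "ik m = i" "sig_plus a1 a2 x m = sigmax_plus a1 a2 i x"
    and last: "\<forall>k>m. ik k = i \<longrightarrow> sig_plus a1 a2 x k < sigmax_plus a1 a2 i x"
  shows "ftil_plus a1 a2 i (x(m := x m - 1)) = x"
proof -
  define y where "y = x(m := x m - 1)"
  define M where "M = sigmax_plus a1 a2 i x"
  have sig_y: "sig_plus a1 a2 y k = sig_plus a1 a2 x k - (if k = m then 1 else if k < m then 2 else 0)"
    if "ik k = i" for k
    using sig_plus_fun_upd[OF fin, of a1 a2 m "-1" k] that m(2) by (simp add: y_def)
  have fin_y: "finite {j. y j \<noteq> 0}" unfolding y_def using fin by (rule finite_support_fun_upd)
  have le_M: "sig_plus a1 a2 x k \<le> M" if "1 \<le> k" "ik k = i" for k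
    using sig_plus_le_sigmax_plus[OF fin that] by (simp add: M_def)
  have y_le: "sig_plus a1 a2 y k \<le> M - 1" if "1 \<le> k" "ik k = i" for k
    using sig_y[OF that(2)] le_M[OF that] last that(2) m(3)
    by (cases "m < k") (auto simp: M_def)
  have y_m: "sig_plus a1 a2 y m = M - 1" using sig_y[OF m(2)] m(3) by (simp add: M_def)
  have max_y: "sigmax_plus a1 a2 i y = M - 1"
    unfolding sigmax_plus_def
  proof (rule Max_eqI[OF finite_sig_plus_image[OF fin_y]])
    show "M - 1 \<in> sig_plus a1 a2 y ` {k. 1 \<le> k \<and> ik k = i}" using y_m m by force
  qed (use y_le in auto)
  have "(LEAST k. 1 \<le> k \<and> ik k = i \<and> sig_plus a1 a2 y k = sigmax_plus a1 a2 i y) = m"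
  proof (rule Least_equality)
    fix k assume k: "1 \<le> k \<and> ik k = i \<and> sig_plus a1 a2 y k = sigmax_plus a1 a2 i y"
    show "m \<le> k"
    proof (rule ccontr)
      assume "\<not> m \<le> k"
      then show False using k sig_y[of k] le_M[of k] max_y by simp
    qed
  qed (use m y_m max_y in simp)
  then show ?thesis unfolding ftil_plus_def Let_def y_def[symmetric] by (simp add: y_def)
qed

definition gamma_cone_plus :: "int \<Rightarrow> int \<Rightarrow> (int \<Rightarrow> int) set" where
  "gamma_cone_plus a1 a2 = {x. finite {k. x k \<noteq> 0} \<and> (\<forall>k\<le>0. x k = 0) \<and> (\<forall>k. 0 \<le> x k) \<and>
     (\<forall>k\<ge>1. real_of_int (x (k + 1)) \<le> gam a1 a2 k * x k)}"

lemma gam_step_down: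
  fixes x :: "int \<Rightarrow> int"
  assumes "0 < a1" "0 < a2" "4 \<le> a1 * a2"
    and drop: "1 \<le> x m + cartan a1 a2 (ik m) (ik (m + 1)) * x (m + 1) + x (m + 2)"
    and cone: "real_of_int (x (m + 2)) \<le> gam a1 a2 (m + 1) * x (m + 1)"
  shows "real_of_int (x (m + 1)) \<le> gam a1 a2 m * (x m - 1)"
proof -
  let ?c = "real_of_int (cartan a1 a2 (ik m) (ik (m + 1)))"
  have "real_of_int 1 \<le> real_of_int (x m + cartan a1 a2 (ik m) (ik (m + 1)) * x (m + 1) + x (m + 2))"
    using drop by (simp only: of_int_le_iff)
  moreover have "(- ?c - gam a1 a2 (m + 1)) * x (m + 1) = - (?c * x (m + 1)) - gam a1 a2 (m + 1) * x (m + 1)"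
    by (simp add: algebra_simps)
  ultimately have "(- ?c - gam a1 a2 (m + 1)) * x (m + 1) \<le> x m - 1"
    using cone by simp
  then have "gam a1 a2 m * ((- ?c - gam a1 a2 (m + 1)) * x (m + 1)) \<le> gam a1 a2 m * (x m - 1)"
    using gam_pos[OF assms(1-3), of m] by (intro mult_left_mono) simp_all
  moreover have "gam a1 a2 m * (- ?c - gam a1 a2 (m + 1)) = 1"
    using gam_mul_cartan[OF assms(1-3) ik_add_1_neq[symmetric]] by simp
  ultimately show ?thesis by (simp add: mult.assoc[symmetric])
qed

lemma Sum_any_fun_upd_diff_1:
  fixes x :: "'a \<Rightarrow> int"
  assumes "finite {k. x k \<noteq> 0}"
  shows "Sum_any (x(m := x m - 1)) = Sum_any x - 1"
proof -
  have "x(m := x m - 1) = (\<lambda>k. x k + (if k = m then -1 else 0))" by auto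
  moreover have "finite {k. (if k = m then -1 else 0) \<noteq> (0::int)}" by simp
  ultimately show ?thesis using assms by (simp add: Sum_any.distrib)
qed

lemma gamma_cone_plus_sigmax_plus_pos:
  assumes x: "x \<in> gamma_cone_plus a1 a2" "x \<noteq> (\<lambda>_. 0)"
  obtains i where "i \<in> {1, 2}" "0 < sigmax_plus a1 a2 i x"
proof -
  have fin: "finite {k. x k \<noteq> 0}" and supp: "\<forall>k\<le>0. x k = 0" and nonneg: "\<forall>k. 0 \<le> x k"
    using x(1) by (auto simp: gamma_cone_plus_def)
  define n where "n = Max {k. x k \<noteq> 0}"
  have "{k. x k \<noteq> 0} \<noteq> {}" using x(2) by auto
  then have "x n \<noteq> 0" unfolding n_def using Max_in[OF fin] by blast
  then have "1 \<le> n" using supp by (cases "n \<le> 0") auto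
  have "\<forall>k>n. x k = 0" unfolding n_def using Max_ge[OF fin] by force
  then have "0 < sig_plus a1 a2 x n"
    using \<open>x n \<noteq> 0\<close> nonneg[rule_format, of n] by (simp add: sig_plus_eq_self)
  then have "0 < sigmax_plus a1 a2 (ik n) x"
    using sig_plus_le_sigmax_plus[OF fin \<open>1 \<le> n\<close>, of "ik n" a1 a2] by simp
  then show ?thesis using that ik_cases[of n] by blast
qed

lemma gamma_cone_plus_fun_upd_diff_1:
  assumes ab: "0 < a1" "0 < a2" "4 \<le> a1 * a2"
    and x: "x \<in> gamma_cone_plus a1 a2" and "1 \<le> m"
    and step_down: "real_of_int (x (m + 1)) \<le> gam a1 a2 m * (x m - 1)"
  shows "x(m := x m - 1) \<in> gamma_cone_plus a1 a2"
  unfolding gamma_cone_plus_def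
proof (intro CollectI conjI allI impI)
  have fin: "finite {k. x k \<noteq> 0}" and supp: "\<forall>k\<le>0. x k = 0" and nonneg: "\<forall>k. 0 \<le> x k"
    and cone: "\<forall>k\<ge>1. real_of_int (x (k + 1)) \<le> gam a1 a2 k * x k"
    using x by (auto simp: gamma_cone_plus_def)
  have "0 \<le> gam a1 a2 m * (x m - 1)"
    using step_down nonneg[rule_format, of "m + 1"] by (meson of_int_0_le_iff order_trans)
  then have "1 \<le> x m" using gam_pos[OF ab, of m] by (simp add: zero_le_mult_iff)
  show "finite {k. (x(m := x m - 1)) k \<noteq> 0}"
    using fin by (rule finite_support_fun_upd)
  fix k
  show "k \<le> 0 \<Longrightarrow> (x(m := x m - 1)) k = 0" "0 \<le> (x(m := x m - 1)) k"
    using supp nonneg \<open>1 \<le> m\<close> \<open>1 \<le> x m\<close> by auto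
  assume "1 \<le> k"
  consider "k = m" | "k + 1 = m" | "k \<noteq> m" "k + 1 \<noteq> m" by blast
  then show "real_of_int ((x(m := x m - 1)) (k + 1)) \<le> gam a1 a2 k * (x(m := x m - 1)) k"
  proof cases
    case 2
    then have "real_of_int (x m - 1) \<le> gam a1 a2 k * x k"
      using cone \<open>1 \<le> k\<close> by (smt (verit) of_int_le_iff)
    with 2 show ?thesis by simp
  qed (use step_down cone \<open>1 \<le> k\<close> in auto)
qed

lemma gamma_cone_plus_ftil_plus_preimage:
  assumes ab: "0 < a1" "0 < a2" "4 \<le> a1 * a2"
    and x: "x \<in> gamma_cone_plus a1 a2" "x \<noteq> (\<lambda>_. 0)"
  obtains i m where "i \<in> {1, 2}" "x(m := x m - 1) \<in> gamma_cone_plus a1 a2"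
    "ftil_plus a1 a2 i (x(m := x m - 1)) = x"
proof -
  have fin: "finite {k. x k \<noteq> 0}"
    and cone: "\<forall>k\<ge>1. real_of_int (x (k + 1)) \<le> gam a1 a2 k * x k"
    using x(1) by (auto simp: gamma_cone_plus_def)
  obtain i where i: "i \<in> {1, 2}" "0 < sigmax_plus a1 a2 i x"
    using gamma_cone_plus_sigmax_plus_pos[OF x] .
  then obtain m where m: "1 \<le> m" "ik m = i" "sig_plus a1 a2 x m = sigmax_plus a1 a2 i x"
    and last: "\<forall>k>m. ik k = i \<longrightarrow> sig_plus a1 a2 x k < sigmax_plus a1 a2 i x"
    using sigmax_plus_last_argmax[OF fin] by blast
  have "sig_plus a1 a2 x (m + 2) < sig_plus a1 a2 x m" using last m by simp
  then have "1 \<le> x m + cartan a1 a2 (ik m) (ik (m + 1)) * x (m + 1) + x (m + 2)"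
    using sig_plus_add_2[OF fin, of a1 a2 m] by simp
  moreover have "real_of_int (x (m + 2)) \<le> gam a1 a2 (m + 1) * x (m + 1)"
    using cone[rule_format, of "m + 1"] m(1) by (simp add: add.assoc)
  ultimately have "real_of_int (x (m + 1)) \<le> gam a1 a2 m * (x m - 1)"
    by (rule gam_step_down[OF ab])
  then have "x(m := x m - 1) \<in> gamma_cone_plus a1 a2"
    by (rule gamma_cone_plus_fun_upd_diff_1[OF ab x(1) m(1)])
  moreover have "ftil_plus a1 a2 i (x(m := x m - 1)) = x"
    by (rule ftil_plus_fun_upd_last_argmax[OF fin m last])
  ultimately show ?thesis using that i(1) by blast
qed

lemma gamma_cone_plus_subset_ImPsi_plus:
  assumes "0 < a1" "0 < a2" "4 \<le> a1 * a2"
  shows "gamma_cone_plus a1 a2 \<subseteq> ImPsi_plus a1 a2"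
proof
  fix x assume "x \<in> gamma_cone_plus a1 a2"
  then show "x \<in> ImPsi_plus a1 a2"
  proof (induction "nat (Sum_any x)" arbitrary: x rule: less_induct)
    case less
    show ?case
    proof (cases "x = (\<lambda>_. 0)")
      case True
      then show ?thesis by (simp add: ImPsi_plus.zero)
    next
      case False
      then obtain i m where i: "i \<in> {1, 2}" and y: "x(m := x m - 1) \<in> gamma_cone_plus a1 a2"
        and x: "ftil_plus a1 a2 i (x(m := x m - 1)) = x"
        using gamma_cone_plus_ftil_plus_preimage[OF assms less.prems] by blast
      have "0 \<le> Sum_any (x(m := x m - 1))"
        using y by (auto simp: gamma_cone_plus_def Sum_any.expand_set intro: sum_nonneg)
      moreover have "Sum_any (x(m := x m - 1)) = Sum_any x - 1"
        using less.prems by (intro Sum_any_fun_upd_diff_1) (simp add: gamma_cone_plus_def)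
      ultimately have "x(m := x m - 1) \<in> ImPsi_plus a1 a2" using y by (intro less.hyps) auto
      then show ?thesis using ImPsi_plus.step[OF _ i] x by metis
    qed
  qed
qed

definition reflect :: "(int \<Rightarrow> int) \<Rightarrow> int \<Rightarrow> int" where
  "reflect x k = - x (1 - k)"

lemma reflect_reflect [simp]: "reflect (reflect x) = x"
  by (simp add: reflect_def fun_eq_iff)

lemma sig_minus_reflect: "sig_minus a1 a2 (reflect y) k = sig_plus a2 a1 y (1 - k)"
proof -
  have supp: "{j. j < k \<and> reflect y j \<noteq> 0} = (\<lambda>j. 1 - j) ` {j. 1 - k < j \<and> y j \<noteq> 0}"
    by (auto simp: reflect_def image_iff intro!: exI[where x = "1 - j" for j])
  have "(\<Sum>j\<in>{j. j < k \<and> reflect y j \<noteq> 0}. cartan a1 a2 (ik k) (ik j) * reflect y j)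
      = - (\<Sum>j\<in>{j. 1 - k < j \<and> y j \<noteq> 0}. cartan a2 a1 (ik (1 - k)) (ik j) * y j)"
    unfolding supp
    by (subst sum.reindex)
      (auto simp: inj_on_def reflect_def sum_negf cartan_reflect[of a2 a1, symmetric])
  then show ?thesis by (simp add: sig_minus_def sig_plus_def reflect_def)
qed

lemma ik_eq_3_minus_iff:
  assumes "i \<in> {1, 2}"
  shows "ik k = 3 - i \<longleftrightarrow> ik (1 - k) = i"
  using assms by (auto simp: ik_def)

lemma reflect_colour_class:
  assumes "i \<in> {1, 2}"
  shows "(\<lambda>k. 1 - k) ` {k. 1 \<le> k \<and> ik k = i} = {k. k \<le> 0 \<and> ik k = 3 - i}"
proof (intro set_eqI iffI)
  fix k assume "k \<in> (\<lambda>k. 1 - k) ` {k. 1 \<le> k \<and> ik k = i}"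
  then obtain j where "k = 1 - j" "1 \<le> j" "ik j = i" by blast
  then show "k \<in> {k. k \<le> 0 \<and> ik k = 3 - i}" using ik_eq_3_minus_iff[OF assms, of k] by simp
next
  fix k assume "k \<in> {k. k \<le> 0 \<and> ik k = 3 - i}"
  then show "k \<in> (\<lambda>k. 1 - k) ` {k. 1 \<le> k \<and> ik k = i}"
    using ik_eq_3_minus_iff[OF assms, of k] by (intro image_eqI[of _ _ "1 - k"]) auto
qed

lemma sigmax_minus_reflect:
  assumes "i \<in> {1, 2}"
  shows "sigmax_minus a1 a2 (3 - i) (reflect y) = sigmax_plus a2 a1 i y"
  unfolding sigmax_minus_def sigmax_plus_def reflect_colour_class[OF assms, symmetric] image_image
  by (simp add: sig_minus_reflect)

lemma etil_minus_reflect: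
  assumes fin: "finite {k. y k \<noteq> 0}" and i: "i \<in> {1, 2}"
  shows "etil_minus a1 a2 (3 - i) (reflect y) = reflect (ftil_plus a2 a1 i y)"
proof -
  define P where "P k \<longleftrightarrow> 1 \<le> k \<and> ik k = i \<and> sig_plus a2 a1 y k = sigmax_plus a2 a1 i y" for k
  obtain k0 where "P k0" using sigmax_plus_attained[OF fin i, of a2 a1] by (auto simp: P_def)
  moreover have "\<And>k. P k \<Longrightarrow> 1 \<le> k" by (simp add: P_def)
  ultimately obtain l where "P l" and l_least: "\<And>k. P k \<Longrightarrow> l \<le> k"
    using int_bounded_below_obtains_least by blast
  have "(LEAST k. P k) = l" using \<open>P l\<close> l_least by (rule Least_equality)
  have "(GREATEST k. k \<le> 0 \<and> ik k = 3 - i \<and>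
      sig_minus a1 a2 (reflect y) k = sigmax_minus a1 a2 (3 - i) (reflect y)) = 1 - l"
  proof (rule Greatest_equality)
    show "1 - l \<le> 0 \<and> ik (1 - l) = 3 - i \<and>
        sig_minus a1 a2 (reflect y) (1 - l) = sigmax_minus a1 a2 (3 - i) (reflect y)"
      using \<open>P l\<close> ik_eq_3_minus_iff[OF i, of "1 - l"]
      by (simp add: P_def sig_minus_reflect sigmax_minus_reflect[OF i])
  next
    fix k assume "k \<le> 0 \<and> ik k = 3 - i \<and>
        sig_minus a1 a2 (reflect y) k = sigmax_minus a1 a2 (3 - i) (reflect y)"
    then have "P (1 - k)"
      using ik_eq_3_minus_iff[OF i, of k] by (simp add: P_def sig_minus_reflect sigmax_minus_reflect[OF i])
    then show "k \<le> 1 - l" using l_least[of "1 - k"] by simp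
  qed
  moreover have "(reflect y)(1 - l := reflect y (1 - l) - 1) = reflect (y(l := y l + 1))"
    by (auto simp: reflect_def fun_eq_iff)
  ultimately show ?thesis
    unfolding etil_minus_def ftil_plus_def Let_def P_def[symmetric] \<open>(LEAST k. P k) = l\<close>
    by simp
qed

lemma ImPsi_plus_finite_support: "y \<in> ImPsi_plus a1 a2 \<Longrightarrow> finite {k. y k \<noteq> 0}"
proof (induction rule: ImPsi_plus.induct)
  case (step y i)
  show ?case unfolding ftil_plus_def Let_def using step.IH by (rule finite_support_fun_upd)
qed simp

lemma reflect_ImPsi_plus: "y \<in> ImPsi_plus a2 a1 \<Longrightarrow> reflect y \<in> ImPsi_minus a1 a2"
proof (induction rule: ImPsi_plus.induct)
  case zero
  then show ?case using ImPsi_minus.zero by (simp add: reflect_def)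
next
  case (step y i)
  have "reflect (ftil_plus a2 a1 i y) = etil_minus a1 a2 (3 - i) (reflect y)"
    using etil_minus_reflect[OF ImPsi_plus_finite_support[OF step.hyps(1)] step.hyps(2)] by simp
  moreover have "3 - i \<in> {1, 2}" using step.hyps(2) by auto
  ultimately show ?case using ImPsi_minus.step[OF step.IH] by simp
qed

lemma Sigma_lam_gam_inequalities:
  assumes "x \<in> Sigma_lam a1 a2 k1 k2"
  shows "1 \<le> k \<Longrightarrow> real_of_int (x (k + 1)) \<le> gam a1 a2 k * x k"
    and "k \<le> 0 \<Longrightarrow> gam a1 a2 k * x k \<le> real_of_int (x (k - 1))"
proof -
  have Xi: "0 \<le> \<phi> x" if "\<phi> \<in> Xi a1 a2 k1 k2" for \<phi>
    using assms that by (simp add: Sigma_lam_def)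
  show "real_of_int (x (k + 1)) \<le> gam a1 a2 k * x k" if "1 \<le> k"
    using Xi[of "\<lambda>x. gam a1 a2 k * x k - x (k + 1)"] that by (simp add: Xi_def Let_def) blast
  show "gam a1 a2 k * x k \<le> real_of_int (x (k - 1))" if "k \<le> 0"
    using Xi[of "\<lambda>x. x (k - 1) - gam a1 a2 k * x k"] that by (simp add: Xi_def Let_def) blast
qed

lemma Sigma_lam_plus_part:
  assumes "x \<in> Sigma_lam a1 a2 k1 k2"
  shows "(\<lambda>k. if 1 \<le> k then x k else 0) \<in> gamma_cone_plus a1 a2"
proof -
  have "finite {k. x k \<noteq> 0}" "\<forall>k\<ge>1. 0 \<le> x k"
    using assms by (auto simp: Sigma_lam_def Zlam_def)
  then show ?thesis
    using Sigma_lam_gam_inequalities(1)[OF assms]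
    by (auto simp: gamma_cone_plus_def intro: finite_subset[rotated])
qed

lemma Sigma_lam_minus_part:
  assumes "x \<in> Sigma_lam a1 a2 k1 k2"
  shows "reflect (\<lambda>k. if k \<le> 0 then x k else 0) \<in> gamma_cone_plus a2 a1"
proof -
  have fin: "finite {k. x k \<noteq> 0}" and nonpos: "\<forall>k\<le>0. x k \<le> 0"
    using assms by (auto simp: Sigma_lam_def Zlam_def)
  have "finite {k. reflect (\<lambda>k. if k \<le> 0 then x k else 0) k \<noteq> 0}"
    by (rule finite_subset[of _ "(\<lambda>k. 1 - k) ` {k. x k \<noteq> 0}"])
      (use fin in \<open>auto simp: reflect_def image_iff split: if_splits intro!: exI[where x = "1 - k" for k]\<close>)
  moreover have "real_of_int (- x (- k)) \<le> gam a2 a1 k * (- x (1 - k))" if "1 \<le> k" for k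
    using Sigma_lam_gam_inequalities(2)[OF assms, of "1 - k"] that gam_reflect[of a2 a1 k] by simp
  ultimately show ?thesis
    using nonpos by (auto simp: gamma_cone_plus_def reflect_def)
qed

theorem lemma4p8:
  fixes a1 a2 k1 k2 :: int
  assumes "1 \<le> a1" and "1 \<le> a2" and "a1 * a2 > 4"
    and "0 < k1" and "0 < k2"
    and "2 \<le> a1 \<and> 2 \<le> a2 \<longrightarrow>
           (k2 \<le> k1 \<and> k1 < (a1 - 1) * k2) \<or> (k1 < k2 \<and> k2 \<le> (a2 - 1) * k1)"
    and "a1 = 1 \<longrightarrow> 2 * k1 \<le> k2 \<and> k2 \<le> (a2 - 2) * k1"
    and "a2 = 1 \<longrightarrow> 2 * k2 \<le> k1 \<and> k1 \<le> (a1 - 2) * k2"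
  shows "Sigma_lam a1 a2 k1 k2 \<subseteq> ImPsi_lam a1 a2"
proof
  fix x assume x: "x \<in> Sigma_lam a1 a2 k1 k2"
  have "0 < a1" "0 < a2" "4 \<le> a1 * a2" "4 \<le> a2 * a1" using assms(1-3) by (simp_all add: mult.commute)
  then have "(\<lambda>k. if 1 \<le> k then x k else 0) \<in> ImPsi_plus a1 a2"
    and "reflect (\<lambda>k. if k \<le> 0 then x k else 0) \<in> ImPsi_plus a2 a1"
    using gamma_cone_plus_subset_ImPsi_plus Sigma_lam_plus_part[OF x] Sigma_lam_minus_part[OF x] by blast+
  then have "(\<lambda>k. if k \<le> 0 then x k else 0) \<in> ImPsi_minus a1 a2"
    using reflect_ImPsi_plus by fastforce
  with \<open>(\<lambda>k. if 1 \<le> k then x k else 0) \<in> ImPsi_plus a1 a2\<close> show "x \<in> ImPsi_lam a1 a2"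
    using x by (simp add: ImPsi_lam_def Sigma_lam_def)
qed

end
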